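(* Let $Z$ be a topological space and $\ell>0$. Then there is a homeomorphism $\mathbb{P}^{\mathcal{G}}_{0,1}{\rm Glob}^{\mathcal{G}}_\ell(Z)\cong\mathcal{G}(1,\ell)\times Z$.
   Context: Work in $\mathbf{Top}$, the category of $\Delta$-generated spaces (or $\Delta$-Hausdorff $\Delta$-generated spaces), cartesian closed with internal hom ${\rm TOP}$ (the $\Delta$-kelleyfication of the compact-open topology); products are taken in $\mathbf{Top}$; subsets carry the $\Delta$-kelleyfication of the relative topology. $\mathcal{G}(\ell_1,\ell_2)$: set of nondecreasing homeomorphisms $[0,\ell_1]\to[0,\ell_2]$, as a subspace of ${\rm TOP}([0,\ell_1],[0,\ell_2])$. A multipointed $d$-space $X=(|X|,X^0,\mathbb{P}^{\mathcal{G}}X)$: a space, a subset of states, a set of continuous execution paths $[0,1]\to|X|$ with endpoints in $X^0$, stable under precomposition by $\mathcal{G}(1,1)$ and normalized composition. $\mathbb{P}^{\mathcal{G}}_{\alpha,\beta}X$, the set of execution paths from $\alpha$ to $\beta$, is a subspace of ${\rm TOP}([0,1],|X|)$. ${\rm Glob}^{\mathcal{G}}_\ell(Z)$: underlying space the quotient of $\{0,1\}\sqcup Z\times[0,\ell]$ identifying every $(z,0)$ with $0$ and every $(z,\ell)$ with $1$; states $\{0,1\}$; execution paths $\delta_z\circ\phi$ for $z\in Z$, $\phi\in\mathcal{G}(1,\ell)$, where $\delta_z(t)=(z,t)$. *)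

theory Defs
  imports "HOL-Analysis.Analysis" "HOL-Homology.Homology"
begin

definition delta_kelley :: "'a topology \<Rightarrow> 'a topology" where
  "delta_kelley X = topology (\<lambda>U. U \<subseteq> topspace X \<and>
     (\<forall>p f. singular_simplex p X f \<longrightarrow>
        openin (subtopology (powertop_real UNIV) (standard_simplex p))
               {x \<in> standard_simplex p. f x \<in> U}))"

definition delta_generated :: "'a topology \<Rightarrow> bool" where
  "delta_generated X \<longleftrightarrow> delta_kelley X = X"

text \<open>Binary product in Top: Delta-kelleyfication of the product topology.\<close>
definition dprod :: "'a topology \<Rightarrow> 'b topology \<Rightarrow> ('a \<times> 'b) topology" where
  "dprod X Y = delta_kelley (prod_topology X Y)"

text \<open>Subspace in Top: Delta-kelleyfication of the relative topology.\<close>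
definition dsub :: "'a topology \<Rightarrow> 'a set \<Rightarrow> 'a topology" where
  "dsub X S = delta_kelley (subtopology X S)"

text \<open>Compact-open topology on the set of continuous maps X \<rightarrow> Y; maps are represented
 extensionally (value undefined outside topspace X).\<close>
definition cmaps :: "'a topology \<Rightarrow> 'b topology \<Rightarrow> ('a \<Rightarrow> 'b) set" where
  "cmaps X Y = {f. continuous_map X Y f \<and> f \<in> extensional (topspace X)}"

definition compact_open :: "'a topology \<Rightarrow> 'b topology \<Rightarrow> ('a \<Rightarrow> 'b) topology" where
  "compact_open X Y = topology_generated_by
     (insert (cmaps X Y) {{f \<in> cmaps X Y. f ` K \<subseteq> U} | K U. compactin X K \<and> openin Y U})"

definition TOP :: "'a topology \<Rightarrow> 'b topology \<Rightarrow> ('a \<Rightarrow> 'b) topology" where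
  "TOP X Y = delta_kelley (compact_open X Y)"

definition interval_top :: "real \<Rightarrow> real topology" where
  "interval_top l = subtopology euclideanreal {0..l}"

definition Gset :: "real \<Rightarrow> real \<Rightarrow> (real \<Rightarrow> real) set" where
  "Gset l1 l2 = {f \<in> extensional {0..l1}. mono_on {0..l1} f \<and>
        homeomorphic_map (interval_top l1) (interval_top l2) f}"

definition Gsp :: "real \<Rightarrow> real \<Rightarrow> (real \<Rightarrow> real) topology" where
  "Gsp l1 l2 = dsub (TOP (interval_top l1) (interval_top l2)) (Gset l1 l2)"

definition disj_union :: "'a topology \<Rightarrow> 'b topology \<Rightarrow> ('a + 'b) topology" where
  "disj_union X Y = topology (\<lambda>U. U \<subseteq> Inl ` topspace X \<union> Inr ` topspace Y \<and>
      openin X {x \<in> topspace X. Inl x \<in> U} \<and> openin Y {y \<in> topspace Y. Inr y \<in> U})"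

definition quot_top :: "'a topology \<Rightarrow> ('a \<times> 'a) set \<Rightarrow> 'a set topology" where
  "quot_top X r = topology (\<lambda>V. V \<subseteq> topspace X // r \<and>
      openin X {x \<in> topspace X. r `` {x} \<in> V})"

text \<open>Source space {0,1} \<squnion> Z \<times> [0,l]; the state 0 is Inl False and 1 is Inl True.\<close>
definition glob_src :: "'a topology \<Rightarrow> real \<Rightarrow> (bool + 'a \<times> real) topology" where
  "glob_src Z l = disj_union (discrete_topology UNIV) (dprod Z (interval_top l))"

definition glob_rel :: "'a topology \<Rightarrow> real \<Rightarrow> ((bool + 'a \<times> real) \<times> (bool + 'a \<times> real)) set" where
  "glob_rel Z l = {(x, y). x \<in> topspace (glob_src Z l) \<and> y \<in> topspace (glob_src Z l) \<and>
      (x = y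
       \<or> ((x = Inl False \<or> (\<exists>z. x = Inr (z, 0))) \<and> (y = Inl False \<or> (\<exists>z. y = Inr (z, 0))))
       \<or> ((x = Inl True \<or> (\<exists>z. x = Inr (z, l))) \<and> (y = Inl True \<or> (\<exists>z. y = Inr (z, l)))))}"

definition glob_top :: "'a topology \<Rightarrow> real \<Rightarrow> (bool + 'a \<times> real) set topology" where
  "glob_top Z l = quot_top (glob_src Z l) (glob_rel Z l)"

definition glob_pt :: "'a topology \<Rightarrow> real \<Rightarrow> (bool + 'a \<times> real) \<Rightarrow> (bool + 'a \<times> real) set" where
  "glob_pt Z l x = glob_rel Z l `` {x}"

definition glob_delta :: "'a topology \<Rightarrow> real \<Rightarrow> 'a \<Rightarrow> real \<Rightarrow> (bool + 'a \<times> real) set" where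
  "glob_delta Z l z t = glob_pt Z l (Inr (z, t))"

definition glob_paths :: "'a topology \<Rightarrow> real \<Rightarrow> (real \<Rightarrow> (bool + 'a \<times> real) set) set" where
  "glob_paths Z l = {restrict (glob_delta Z l z \<circ> \<phi>) {0..1} | z \<phi>.
      z \<in> topspace Z \<and> \<phi> \<in> Gset 1 l}"

definition glob_paths_between ::
  "'a topology \<Rightarrow> real \<Rightarrow> (bool + 'a \<times> real) set \<Rightarrow> (bool + 'a \<times> real) set
     \<Rightarrow> (real \<Rightarrow> (bool + 'a \<times> real) set) topology" where
  "glob_paths_between Z l \<alpha> \<beta> = dsub (TOP (interval_top 1) (glob_top Z l))
      {\<gamma> \<in> glob_paths Z l. \<gamma> 0 = \<alpha> \<and> \<gamma> 1 = \<beta>}"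

end

(*
  A path of Glob_l(Z) from 0 to 1 is delta_z o phi, and it determines (phi, z): phi is its
  height profile and z is the fibre coordinate of its midpoint, which lies strictly between the
  two states. So (phi, z) |-> delta_z o phi is a bijection G(1,l) x |Z| -> P_{0,1} Glob_l(Z).
  Both spaces are Delta-kelleyfications, whose open sets are tested by singular simplices, so
  it suffices that both maps preserve continuity of maps out of simplices.  By the exponential
  law for the compact Hausdorff interval, a simplex of paths is a map Delta^p x [0,1] -> Glob_l(Z),
  and such a map lifts through the Delta-kelleyfied product Z x [0,l] because the prism
  Delta^p x [0,1] is itself a quotient of the simplex Delta^(2p+1).
*)
theory Submission
  imports Defs
begin

lemma istopologyI:
  assumes "\<And>S T. P S \<Longrightarrow> P T \<Longrightarrow> P (S \<inter> T)" and "\<And>K. (\<And>S. S \<in> K \<Longrightarrow> P S) \<Longrightarrow> P (\<Union>K)"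
  shows "istopology P"
  using assms unfolding istopology_def by blast

lemma istopologyD:
  assumes "istopology P"
  shows "P S \<Longrightarrow> P T \<Longrightarrow> P (S \<inter> T)" and "(\<And>S. S \<in> K \<Longrightarrow> P S) \<Longrightarrow> P (\<Union>K)"
  using assms unfolding istopology_def by blast+

lemma istopology_conj:
  "istopology P \<Longrightarrow> istopology Q \<Longrightarrow> istopology (\<lambda>U. P U \<and> Q U)"
  by (rule istopologyI) (simp_all add: istopologyD)

lemma istopology_all:
  "(\<And>i. istopology (P i)) \<Longrightarrow> istopology (\<lambda>U. \<forall>i. P i U)"
  by (rule istopologyI) (simp_all add: istopologyD)

lemma istopology_imp:
  "(A \<Longrightarrow> istopology P) \<Longrightarrow> istopology (\<lambda>U. A \<longrightarrow> P U)"
  by (rule istopologyI) (simp_all add: istopologyD)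

lemma istopology_subset: "istopology (\<lambda>U. U \<subseteq> S)"
  by (rule istopologyI) auto

lemma istopology_openin_preimage:
  "istopology (\<lambda>U. openin X {x \<in> topspace X. f x \<in> U})"
  unfolding istopology_def
proof (intro conjI allI impI)
  fix S T
  assume "openin X {x \<in> topspace X. f x \<in> S}" "openin X {x \<in> topspace X. f x \<in> T}"
  then have "openin X ({x \<in> topspace X. f x \<in> S} \<inter> {x \<in> topspace X. f x \<in> T})"
    by (rule openin_Int)
  moreover have "{x \<in> topspace X. f x \<in> S} \<inter> {x \<in> topspace X. f x \<in> T}
      = {x \<in> topspace X. f x \<in> S \<inter> T}"
    by blast
  ultimately show "openin X {x \<in> topspace X. f x \<in> S \<inter> T}"
    by simp
next
  fix K
  assume "\<forall>U\<in>K. openin X {x \<in> topspace X. f x \<in> U}"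
  then have "openin X (\<Union>U\<in>K. {x \<in> topspace X. f x \<in> U})"
    by (intro openin_Union) blast
  moreover have "(\<Union>U\<in>K. {x \<in> topspace X. f x \<in> U}) = {x \<in> topspace X. f x \<in> \<Union>K}"
    by blast
  ultimately show "openin X {x \<in> topspace X. f x \<in> \<Union>K}"
    by simp
qed

lemma topspace_topology:
  assumes "istopology P" "P S" "\<And>U. P U \<Longrightarrow> U \<subseteq> S"
  shows "topspace (topology P) = S"
  using assms by (auto simp: topspace_def)

section \<open>Delta-kelleyfication\<close>

abbreviation simplex_space :: "nat \<Rightarrow> (nat \<Rightarrow> real) topology" where
  "simplex_space p \<equiv> subtopology (powertop_real UNIV) (standard_simplex p)"

lemma istopology_delta_kelley:
  "istopology (\<lambda>U. U \<subseteq> topspace X \<and>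
     (\<forall>p f. singular_simplex p X f \<longrightarrow>
        openin (simplex_space p) {x \<in> standard_simplex p. f x \<in> U}))"
proof -
  have "istopology (\<lambda>U. U \<subseteq> topspace X \<and>
     (\<forall>p f. singular_simplex p X f \<longrightarrow>
        openin (simplex_space p) {x \<in> topspace (simplex_space p). f x \<in> U}))"
    by (intro istopology_conj istopology_subset istopology_all istopology_imp
        istopology_openin_preimage)
  then show ?thesis
    by simp
qed

lemma openin_delta_kelley:
  "openin (delta_kelley X) U \<longleftrightarrow> U \<subseteq> topspace X \<and>
     (\<forall>p f. singular_simplex p X f \<longrightarrow>
        openin (simplex_space p) {x \<in> standard_simplex p. f x \<in> U})"
  unfolding delta_kelley_def by (simp add: istopology_delta_kelley)

lemma openin_imp_openin_delta_kelley: "openin X U \<Longrightarrow> openin (delta_kelley X) U"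
  by (auto simp: openin_delta_kelley singular_simplex_def openin_subset
      dest: openin_continuous_map_preimage)

lemma topspace_delta_kelley [simp]: "topspace (delta_kelley X) = topspace X"
  unfolding delta_kelley_def
  by (rule topspace_topology[OF istopology_delta_kelley])
    (auto simp: openin_imp_openin_delta_kelley[of X "topspace X", unfolded openin_delta_kelley])

lemma continuous_map_delta_kelley_imp:
  assumes f: "continuous_map W (delta_kelley X) f"
  shows "continuous_map W X f"
  unfolding continuous_map_def
proof (intro conjI allI impI)
  show "f \<in> topspace W \<rightarrow> topspace X"
    using continuous_map_funspace[OF f] by simp
  fix U assume "openin X U"
  then show "openin W {x \<in> topspace W. f x \<in> U}"
    using f openin_continuous_map_preimage openin_imp_openin_delta_kelley by blast
qed

lemma continuous_map_simplex_delta_kelley_iff: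
  "continuous_map (simplex_space p) (delta_kelley X) f \<longleftrightarrow> continuous_map (simplex_space p) X f"
proof
  assume f: "continuous_map (simplex_space p) X f"
  have "openin (simplex_space p) {x \<in> topspace (simplex_space p). f x \<in> U}"
    if "openin (delta_kelley X) U" for U
  proof -
    have "singular_simplex p X (restrict f (standard_simplex p))"
      using f by (simp add: singular_simplex_def)
    then have "openin (simplex_space p)
        {x \<in> standard_simplex p. restrict f (standard_simplex p) x \<in> U}"
      using that unfolding openin_delta_kelley by blast
    moreover have "{x \<in> standard_simplex p. restrict f (standard_simplex p) x \<in> U}
        = {x \<in> topspace (simplex_space p). f x \<in> U}"
      by auto
    ultimately show ?thesis
      by simp
  qed
  with f show "continuous_map (simplex_space p) (delta_kelley X) f"
    by (simp add: continuous_map_def)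
qed (rule continuous_map_delta_kelley_imp)

lemma continuous_map_simplex_TOP_iff:
  "continuous_map (simplex_space p) (TOP X Y) f \<longleftrightarrow> continuous_map (simplex_space p) (compact_open X Y) f"
  unfolding TOP_def by (rule continuous_map_simplex_delta_kelley_iff)

lemma continuous_map_simplex_dsub_iff:
  "continuous_map (simplex_space p) (dsub X S) f \<longleftrightarrow>
     continuous_map (simplex_space p) X f \<and> f \<in> standard_simplex p \<rightarrow> S"
  unfolding dsub_def continuous_map_simplex_delta_kelley_iff continuous_map_in_subtopology
  by simp

lemma continuous_map_delta_kelleyI:
  assumes "\<And>p \<sigma>. continuous_map (simplex_space p) X \<sigma> \<Longrightarrow> continuous_map (simplex_space p) Y (f \<circ> \<sigma>)"
  shows "continuous_map (delta_kelley X) (delta_kelley Y) f"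
  unfolding continuous_map_def
proof (intro conjI allI impI Pi_I)
  fix x assume "x \<in> topspace (delta_kelley X)"
  then have "continuous_map (simplex_space 0) Y (\<lambda>_. f x)"
    using assms[of 0 "\<lambda>_. x"] by (simp add: o_def)
  moreover have "simplex_space 0 \<noteq> trivial_topology"
  proof
    assume "simplex_space 0 = trivial_topology"
    then have "topspace (simplex_space 0) = {}"
      by simp
    then show False
      using nonempty_standard_simplex[of 0] by simp
  qed
  ultimately show "f x \<in> topspace (delta_kelley Y)"
    by simp
next
  fix U assume U: "openin (delta_kelley Y) U"
  show "openin (delta_kelley X) {x \<in> topspace (delta_kelley X). f x \<in> U}"
    unfolding openin_delta_kelley
  proof (intro conjI allI impI)
    fix p \<sigma> assume "singular_simplex p X \<sigma>"
    then have \<sigma>: "continuous_map (simplex_space p) X \<sigma>"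
      by (simp add: singular_simplex_def)
    then have "continuous_map (simplex_space p) Y (f \<circ> \<sigma>)"
      by (rule assms)
    then have "singular_simplex p Y (restrict (f \<circ> \<sigma>) (standard_simplex p))"
      unfolding singular_simplex_def by (auto intro: continuous_map_eq)
    then have "openin (simplex_space p)
        {x \<in> standard_simplex p. restrict (f \<circ> \<sigma>) (standard_simplex p) x \<in> U}"
      using U unfolding openin_delta_kelley by blast
    moreover have "{x \<in> standard_simplex p. restrict (f \<circ> \<sigma>) (standard_simplex p) x \<in> U}
        = {x \<in> standard_simplex p. \<sigma> x \<in> {x \<in> topspace (delta_kelley X). f x \<in> U}}"
      using continuous_map_funspace[OF \<sigma>] by auto
    ultimately show "openin (simplex_space p)
        {x \<in> standard_simplex p. \<sigma> x \<in> {x \<in> topspace (delta_kelley X). f x \<in> U}}"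
      by simp
  qed auto
qed

lemma homeomorphic_space_delta_kelleyI:
  assumes "\<And>p \<sigma>. continuous_map (simplex_space p) X \<sigma> \<Longrightarrow> continuous_map (simplex_space p) Y (f \<circ> \<sigma>)"
    and "\<And>p \<sigma>. continuous_map (simplex_space p) Y \<sigma> \<Longrightarrow> continuous_map (simplex_space p) X (g \<circ> \<sigma>)"
    and "\<And>x. x \<in> topspace X \<Longrightarrow> g (f x) = x"
    and "\<And>y. y \<in> topspace Y \<Longrightarrow> f (g y) = y"
  shows "delta_kelley X homeomorphic_space delta_kelley Y"
  unfolding homeomorphic_space_def homeomorphic_maps_def
proof (intro exI conjI)
  show "continuous_map (delta_kelley X) (delta_kelley Y) f"
    using assms(1) by (rule continuous_map_delta_kelleyI)
  show "continuous_map (delta_kelley Y) (delta_kelley X) g"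
    using assms(2) by (rule continuous_map_delta_kelleyI)
qed (use assms in auto)

lemma continuous_map_into_delta_kelley_from_quotient:
  assumes q: "quotient_map (simplex_space n) W q" and g: "continuous_map W X g"
  shows "continuous_map W (delta_kelley X) g"
proof -
  have "continuous_map (simplex_space n) X (g \<circ> q)"
    using quotient_imp_continuous_map[OF q] g by (rule continuous_map_compose)
  then have "continuous_map (simplex_space n) (delta_kelley X) (g \<circ> q)"
    by (simp add: continuous_map_simplex_delta_kelley_iff)
  with q show ?thesis
    by (rule continuous_compose_quotient_map)
qed

lemma topspace_interval_top [simp]: "topspace (interval_top l) = {0..l}"
  by (simp add: interval_top_def)

text \<open>The prism \<open>\<Delta>\<^sup>p \<times> [0,1]\<close> is a quotient of \<open>\<Delta>\<^sup>2\<^sup>p\<^sup>+\<^sup>1\<close>: add up the two halves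
  of the barycentric coordinates and record the weight of the second half.\<close>

definition prism_map :: "nat \<Rightarrow> (nat \<Rightarrow> real) \<Rightarrow> (nat \<Rightarrow> real) \<times> real" where
  "prism_map p x = ((\<lambda>i. if i \<le> p then x i + x (i + Suc p) else 0), (\<Sum>i = Suc p..p + Suc p. x i))"

lemma sum_upper_half_shift: "(\<Sum>i = Suc p..p + Suc p. f i) = (\<Sum>i\<le>p. f (i + Suc p))"
proof -
  have "(\<Sum>i = 0 + Suc p..p + Suc p. f i) = (\<Sum>i = 0..p. f (i + Suc p))"
    by (rule sum.shift_bounds_cl_nat_ivl)
  then show ?thesis
    by (simp add: atLeast0AtMost)
qed

lemma prism_map_in_prism:
  assumes x: "x \<in> standard_simplex (p + Suc p)"
  shows "prism_map p x \<in> standard_simplex p \<times> {0..1}"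
proof -
  have x0: "\<And>i. 0 \<le> x i" and xs: "(\<Sum>i\<le>p + Suc p. x i) = 1"
    using x by (auto simp: standard_simplex_def)
  have halves: "(\<Sum>i\<le>p. x i) + (\<Sum>i = Suc p..p + Suc p. x i) = 1"
    using xs sum_up_index_split[of x p "Suc p"] by simp
  have lower: "0 \<le> (\<Sum>i\<le>p. x i)" and upper: "0 \<le> (\<Sum>i = Suc p..p + Suc p. x i)"
    by (simp_all add: sum_nonneg x0)
  have "x i + x (i + Suc p) \<le> 1" if "i \<le> p" for i
  proof -
    have "x i \<le> (\<Sum>i\<le>p. x i)"
      using that x0 by (intro member_le_sum) auto
    moreover have "x (i + Suc p) \<le> (\<Sum>i = Suc p..p + Suc p. x i)"
      using that x0 by (intro member_le_sum) auto
    ultimately show ?thesis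
      using halves by linarith
  qed
  moreover have "(\<Sum>i\<le>p. (if i \<le> p then x i + x (i + Suc p) else 0)) = 1"
  proof -
    have "(\<Sum>i\<le>p. (if i \<le> p then x i + x (i + Suc p) else 0)) = (\<Sum>i\<le>p. x i) + (\<Sum>i\<le>p. x (i + Suc p))"
      by (simp add: sum.distrib)
    then show ?thesis
      using halves unfolding sum_upper_half_shift by linarith
  qed
  ultimately show ?thesis
    using x0 lower upper halves unfolding prism_map_def standard_simplex_def
    by (auto intro: add_nonneg_nonneg)
qed

lemma prism_in_image_prism_map:
  assumes s: "s \<in> standard_simplex p" and t: "t \<in> {0..1::real}"
  shows "(s, t) \<in> prism_map p ` standard_simplex (p + Suc p)"
proof -
  define x where "x = (\<lambda>i. if i \<le> p then s i * (1 - t)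
      else if i \<le> p + Suc p then s (i - Suc p) * t else 0)"
  have s0: "\<And>i. 0 \<le> s i" and s1: "\<And>i. s i \<le> 1" and sz: "\<And>i. i > p \<Longrightarrow> s i = 0"
    and ss: "(\<Sum>i\<le>p. s i) = 1"
    using s by (auto simp: standard_simplex_def)
  have upper: "(\<Sum>i = Suc p..p + Suc p. x i) = t"
  proof -
    have "(\<Sum>i = Suc p..p + Suc p. x i) = (\<Sum>i\<le>p. s i * t)"
      unfolding sum_upper_half_shift x_def by (intro sum.cong) auto
    then show ?thesis
      using ss by (simp add: sum_distrib_right[symmetric])
  qed
  have lower: "(\<Sum>i\<le>p. x i) = 1 - t"
  proof -
    have "(\<Sum>i\<le>p. x i) = (\<Sum>i\<le>p. s i * (1 - t))"
      unfolding x_def by (intro sum.cong) auto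
    then show ?thesis
      using ss by (simp add: sum_distrib_right[symmetric])
  qed
  have "0 \<le> x i \<and> x i \<le> 1" for i
    using s0[of i] s1[of i] s0[of "i - Suc p"] s1[of "i - Suc p"] t unfolding x_def
    by (auto intro: mult_le_one mult_nonneg_nonneg)
  then have "x \<in> standard_simplex (p + Suc p)"
    using upper lower sum_up_index_split[of x p "Suc p"]
    unfolding standard_simplex_def by (auto simp: x_def)
  moreover have "prism_map p x = (s, t)"
  proof -
    have "(\<lambda>i. if i \<le> p then x i + x (i + Suc p) else 0) = s"
    proof
      fix i show "(if i \<le> p then x i + x (i + Suc p) else 0) = s i"
        using sz[of i] by (auto simp: x_def algebra_simps)
    qed
    then show ?thesis
      using upper by (simp add: prism_map_def)
  qed
  ultimately show ?thesis
    by (metis image_eqI)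
qed

lemma continuous_map_prism_map:
  "continuous_map (simplex_space (p + Suc p)) (prod_topology (simplex_space p) (interval_top 1)) (prism_map p)"
proof -
  have coord: "continuous_map (simplex_space (p + Suc p)) euclideanreal (\<lambda>x. x i)" for i
    by (rule continuous_map_from_subtopology) (rule continuous_map_product_projection; simp)
  have "continuous_map (simplex_space (p + Suc p)) (powertop_real UNIV)
      (\<lambda>x i. if i \<le> p then x i + x (i + Suc p) else 0)"
    unfolding continuous_map_componentwise_UNIV
  proof
    fix k
    show "continuous_map (simplex_space (p + Suc p)) euclideanreal
        (\<lambda>x. if k \<le> p then x k + x (k + Suc p) else 0)"
      using continuous_map_add[OF coord[of k] coord[of "k + Suc p"]] by (cases "k \<le> p") auto
  qed
  moreover have "continuous_map (simplex_space (p + Suc p)) euclideanreal (\<lambda>x. \<Sum>i = Suc p..p + Suc p. x i)"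
    by (intro continuous_map_sum coord) auto
  ultimately have "continuous_map (simplex_space (p + Suc p)) (prod_topology (powertop_real UNIV) euclideanreal) (prism_map p)"
    unfolding prism_map_def by (intro continuous_map_pairedI)
  then show ?thesis
    unfolding interval_top_def subtopology_Times[symmetric]
    using prism_map_in_prism by (intro continuous_map_into_subtopology) auto
qed

lemma quotient_map_prism_map:
  "quotient_map (simplex_space (p + Suc p)) (prod_topology (simplex_space p) (interval_top 1)) (prism_map p)"
proof (rule continuous_imp_quotient_map[OF continuous_map_prism_map])
  show "compact_space (simplex_space (p + Suc p))"
    by (simp add: compact_space_subtopology compactin_standard_simplex)
  show "Hausdorff_space (prod_topology (simplex_space p) (interval_top 1))"
    unfolding Hausdorff_space_prod_topology interval_top_def
    by (simp add: Hausdorff_space_subtopology Hausdorff_space_product_topology)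
  have "prism_map p ` standard_simplex (p + Suc p) = standard_simplex p \<times> {0..1}"
    using prism_map_in_prism prism_in_image_prism_map by blast
  then show "prism_map p ` topspace (simplex_space (p + Suc p))
      = topspace (prod_topology (simplex_space p) (interval_top 1))"
    by simp
qed

lemma continuous_map_prism_into_delta_kelley:
  "continuous_map (prod_topology (simplex_space p) (interval_top 1)) X g \<Longrightarrow>
   continuous_map (prod_topology (simplex_space p) (interval_top 1)) (delta_kelley X) g"
  by (rule continuous_map_into_delta_kelley_from_quotient[OF quotient_map_prism_map])

section \<open>The compact-open topology\<close>

lemma continuous_map_into_topology_generated_by:
  assumes "f \<in> topspace X \<rightarrow> \<Union>B"
    and "\<And>b. b \<in> B \<Longrightarrow> openin X {x \<in> topspace X. f x \<in> b}"
  shows "continuous_map X (topology_generated_by B) f"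
  unfolding continuous_map_def
proof (intro conjI allI impI)
  show "f \<in> topspace X \<rightarrow> topspace (topology_generated_by B)"
    using assms(1) by simp
next
  fix U assume "openin (topology_generated_by B) U"
  then have "generate_topology_on B U"
    by (simp add: openin_topology_generated_by_iff)
  then show "openin X {x \<in> topspace X. f x \<in> U}"
  proof induction
    case Empty
    then show ?case by simp
  next
    case (Int a b)
    have "{x \<in> topspace X. f x \<in> a \<inter> b} = {x \<in> topspace X. f x \<in> a} \<inter> {x \<in> topspace X. f x \<in> b}"
      by blast
    with Int show ?case
      by (simp add: openin_Int)
  next
    case (UN K)
    have "openin X (\<Union>k\<in>K. {x \<in> topspace X. f x \<in> k})"
      using UN.IH by (intro openin_Union) blast
    moreover have "(\<Union>k\<in>K. {x \<in> topspace X. f x \<in> k}) = {x \<in> topspace X. f x \<in> \<Union>K}"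
      by blast
    ultimately show ?case
      by simp
  next
    case (Basis s)
    then show ?case using assms(2) by blast
  qed
qed

lemma topspace_compact_open [simp]: "topspace (compact_open X Y) = cmaps X Y"
  unfolding compact_open_def by auto

lemma openin_compact_open_basic:
  "compactin X K \<Longrightarrow> openin Y U \<Longrightarrow> openin (compact_open X Y) {f \<in> cmaps X Y. f ` K \<subseteq> U}"
  unfolding compact_open_def by (rule topology_generated_by_Basis) blast

lemma openin_tube:
  assumes W: "openin (prod_topology P X) W" and K: "compactin X K"
  shows "openin P {s \<in> topspace P. {s} \<times> K \<subseteq> W}"
proof (subst openin_subopen, intro ballI)
  fix s0 assume "s0 \<in> {s \<in> topspace P. {s} \<times> K \<subseteq> W}"
  then have "s0 \<in> topspace P" "{s0} \<times> K \<subseteq> W"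
    by simp_all
  from tube_lemma_right[OF W K this]
  obtain N V where "openin P N" "s0 \<in> N" "K \<subseteq> V" "N \<times> V \<subseteq> W"
    by blast
  moreover have "N \<subseteq> topspace P"
    using \<open>openin P N\<close> by (rule openin_subset)
  ultimately show "\<exists>T. openin P T \<and> s0 \<in> T \<and> T \<subseteq> {s \<in> topspace P. {s} \<times> K \<subseteq> W}"
    by blast
qed

lemma continuous_map_slice:
  "continuous_map (prod_topology P X) Y H \<Longrightarrow> s \<in> topspace P \<Longrightarrow> continuous_map X Y (\<lambda>t. H (s, t))"
  using continuous_map_compose[of X "prod_topology P X" "\<lambda>t. (s, t)" Y H]
  by (simp add: continuous_map_pairedI o_def)

lemma continuous_map_curry_compact_open:
  assumes H: "continuous_map (prod_topology P X) Y H"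
  shows "continuous_map P (compact_open X Y) (\<lambda>s. restrict (\<lambda>t. H (s, t)) (topspace X))"
proof -
  let ?C = "\<lambda>s. restrict (\<lambda>t. H (s, t)) (topspace X)"
  have slice: "?C s \<in> cmaps X Y" if "s \<in> topspace P" for s
    using continuous_map_slice[OF H that] by (simp add: cmaps_def continuous_map_eq[of X Y "\<lambda>t. H (s, t)"])
  have "openin P {s \<in> topspace P. ?C s \<in> cmaps X Y \<and> ?C s ` K \<subseteq> U}"
    if K: "compactin X K" and U: "openin Y U" for K U
  proof -
    have "K \<subseteq> topspace X"
      using K by (rule compactin_subset_topspace)
    then have "{s \<in> topspace P. ?C s \<in> cmaps X Y \<and> ?C s ` K \<subseteq> U}
        = {s \<in> topspace P. {s} \<times> K \<subseteq> {w \<in> topspace (prod_topology P X). H w \<in> U}}"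
      using slice by auto
    then show ?thesis
      using openin_tube[OF openin_continuous_map_preimage[OF H U] K] by simp
  qed
  moreover have "{s \<in> topspace P. ?C s \<in> cmaps X Y} = topspace P"
    using slice by blast
  ultimately show ?thesis
    unfolding compact_open_def
    by (intro continuous_map_into_topology_generated_by) (use slice in auto)
qed

lemma compact_neighbourhood_into_open:
  assumes X: "locally_compact_space X" "Hausdorff_space X"
    and g: "continuous_map X Y g" and U: "openin Y U" and t: "t \<in> topspace X" "g t \<in> U"
  obtains V K where "openin X V" "compactin X K" "t \<in> V" "V \<subseteq> K" "g ` K \<subseteq> U"
proof -
  have "neighbourhood_base_of (compactin X) X"
    using X locally_compact_space_neighbourhood_base by blast
  moreover have "openin X {t \<in> topspace X. g t \<in> U}"
    using g U by (rule openin_continuous_map_preimage)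
  moreover have "t \<in> {t \<in> topspace X. g t \<in> U}"
    using t by simp
  ultimately have "\<exists>V K. openin X V \<and> compactin X K \<and> t \<in> V \<and> V \<subseteq> K \<and>
      K \<subseteq> {t \<in> topspace X. g t \<in> U}"
    by (rule neighbourhood_base_of[THEN iffD1, rule_format, OF _ conjI])
  then show thesis
    using that by blast
qed

lemma continuous_map_eval_compact_open:
  assumes X: "locally_compact_space X" "Hausdorff_space X"
  shows "continuous_map (prod_topology (compact_open X Y) X) Y (\<lambda>(g, t). g t)"
  unfolding continuous_map_def
proof (intro conjI allI impI)
  show "(\<lambda>(g, t). g t) \<in> topspace (prod_topology (compact_open X Y) X) \<rightarrow> topspace Y"
    by (auto simp: cmaps_def dest: continuous_map_image_subset_topspace)
next
  fix U assume U: "openin Y U"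
  let ?S = "{w \<in> topspace (prod_topology (compact_open X Y) X). (\<lambda>(g, t). g t) w \<in> U}"
  show "openin (prod_topology (compact_open X Y) X) ?S"
  proof (subst openin_subopen, intro ballI)
    fix w assume "w \<in> ?S"
    then obtain g t0 where w: "w = (g, t0)" "g \<in> cmaps X Y" "t0 \<in> topspace X" "g t0 \<in> U"
      by auto
    then have g: "continuous_map X Y g"
      by (simp add: cmaps_def)
    obtain V K where V: "openin X V" "compactin X K" "t0 \<in> V" "V \<subseteq> K" and KU: "g ` K \<subseteq> U"
      using compact_neighbourhood_into_open[OF X g U w(3,4)] by blast
    let ?T = "{h \<in> cmaps X Y. h ` K \<subseteq> U} \<times> V"
    have "openin (prod_topology (compact_open X Y) X) ?T"
      using openin_compact_open_basic[OF V(2) U] V(1) by (simp add: openin_prod_Times_iff)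
    moreover have "w \<in> ?T"
      using w V KU by auto
    moreover have "?T \<subseteq> ?S"
      using V(4) openin_subset[OF V(1)] by (auto simp: image_subset_iff)
    ultimately show "\<exists>T. openin (prod_topology (compact_open X Y) X) T \<and> w \<in> T \<and> T \<subseteq> ?S"
      by blast
  qed
qed

lemma continuous_map_uncurry_compact_open:
  assumes "locally_compact_space X" "Hausdorff_space X"
    and \<sigma>: "continuous_map P (compact_open X Y) \<sigma>"
  shows "continuous_map (prod_topology P X) Y (\<lambda>(s, t). \<sigma> s t)"
proof -
  have "continuous_map (prod_topology P X) (prod_topology (compact_open X Y) X) (\<lambda>w. ((\<sigma> \<circ> fst) w, snd w))"
    using continuous_map_compose[OF continuous_map_fst \<sigma>] continuous_map_snd
    by (rule continuous_map_pairedI)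
  from continuous_map_compose[OF this continuous_map_eval_compact_open[OF assms(1,2)]]
  show ?thesis
    by (simp add: case_prod_unfold o_def)
qed

lemma compact_space_interval_top: "compact_space (interval_top l)"
  by (simp add: interval_top_def compact_space_subtopology)

lemma Hausdorff_space_interval_top: "Hausdorff_space (interval_top l)"
  by (simp add: interval_top_def Hausdorff_space_subtopology)

lemma continuous_map_uncurry_compact_open_interval:
  "continuous_map P (compact_open (interval_top l) Y) \<sigma> \<Longrightarrow>
   continuous_map (prod_topology P (interval_top l)) Y (\<lambda>(s, t). \<sigma> s t)"
  by (rule continuous_map_uncurry_compact_open)
    (simp_all add: compact_space_interval_top Hausdorff_space_interval_top
      compact_imp_locally_compact_space)

lemma openin_disj_union:
  "openin (disj_union X Y) U \<longleftrightarrow> U \<subseteq> Inl ` topspace X \<union> Inr ` topspace Y \<and>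
      openin X {x \<in> topspace X. Inl x \<in> U} \<and> openin Y {y \<in> topspace Y. Inr y \<in> U}"
  unfolding disj_union_def
  by (simp add: istopology_conj istopology_subset istopology_openin_preimage)

lemma topspace_disj_union: "topspace (disj_union X Y) = Inl ` topspace X \<union> Inr ` topspace Y"
proof -
  have "{x \<in> topspace X. Inl x \<in> Inl ` topspace X \<union> Inr ` topspace Y} = topspace X"
    "{y \<in> topspace Y. Inr y \<in> Inl ` topspace X \<union> Inr ` topspace Y} = topspace Y"
    by auto
  then show ?thesis
    unfolding disj_union_def
    by (intro topspace_topology istopology_conj istopology_subset istopology_openin_preimage) auto
qed

lemma continuous_map_Inr_disj_union: "continuous_map Y (disj_union X Y) Inr"
  by (auto simp: continuous_map_def topspace_disj_union openin_disj_union)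

lemma openin_quot_top:
  "openin (quot_top X r) V \<longleftrightarrow> V \<subseteq> topspace X // r \<and> openin X {x \<in> topspace X. r `` {x} \<in> V}"
  unfolding quot_top_def
  by (simp add: istopology_conj istopology_subset istopology_openin_preimage)

lemma topspace_quot_top: "topspace (quot_top X r) = topspace X // r"
proof -
  have "{x \<in> topspace X. r `` {x} \<in> topspace X // r} = topspace X"
    by (auto intro: quotientI)
  then show ?thesis
    unfolding quot_top_def
    by (intro topspace_topology istopology_conj istopology_subset istopology_openin_preimage) auto
qed

lemma continuous_map_quot_top: "continuous_map X (quot_top X r) (\<lambda>x. r `` {x})"
  by (auto simp: continuous_map_def topspace_quot_top openin_quot_top quotientI)

lemma continuous_map_from_quot_top:
  assumes g: "continuous_map X Y g"
    and h: "\<And>x. x \<in> topspace X \<Longrightarrow> h (r `` {x}) = g x"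
  shows "continuous_map (quot_top X r) Y h"
  unfolding continuous_map_def
proof (intro conjI allI impI)
  show "h \<in> topspace (quot_top X r) \<rightarrow> topspace Y"
    using h continuous_map_image_subset_topspace[OF g]
    by (auto simp: topspace_quot_top elim!: quotientE)
next
  fix U assume U: "openin Y U"
  have "{x \<in> topspace X. r `` {x} \<in> {c \<in> topspace (quot_top X r). h c \<in> U}} = {x \<in> topspace X. g x \<in> U}"
    using h by (auto simp: topspace_quot_top intro: quotientI)
  with openin_continuous_map_preimage[OF g U]
  show "openin (quot_top X r) {c \<in> topspace (quot_top X r). h c \<in> U}"
    by (simp add: openin_quot_top topspace_quot_top)
qed

section \<open>The globe\<close>

definition glob_src_height :: "real \<Rightarrow> bool + 'a \<times> real \<Rightarrow> real" where
  "glob_src_height l x = (case x of Inl b \<Rightarrow> if b then l else 0 | Inr zt \<Rightarrow> snd zt)"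

text \<open>Coordinates of a point of the globe, read off an arbitrary representative of its class;
  the fibre coordinate is only meaningful away from the two states.\<close>

definition glob_height :: "real \<Rightarrow> (bool + 'a \<times> real) set \<Rightarrow> real" where
  "glob_height l c = glob_src_height l (SOME x. x \<in> c)"

definition glob_fibre :: "(bool + 'a \<times> real) set \<Rightarrow> 'a" where
  "glob_fibre c = fst (projr (SOME x. x \<in> c))"

definition glob_band :: "'a topology \<Rightarrow> real \<Rightarrow> 'a set \<Rightarrow> (bool + 'a \<times> real) set set" where
  "glob_band Z l V = {glob_rel Z l `` {Inr (z, t)} | z t. z \<in> V \<and> 0 < t \<and> t < l}"

lemma topspace_glob_src:
  "topspace (glob_src Z l) = range Inl \<union> Inr ` (topspace Z \<times> {0..l})"
  by (simp add: glob_src_def topspace_disj_union dprod_def)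

lemma openin_glob_src:
  "openin (glob_src Z l) U \<longleftrightarrow> U \<subseteq> topspace (glob_src Z l) \<and>
     openin (dprod Z (interval_top l)) {y \<in> topspace (dprod Z (interval_top l)). Inr y \<in> U}"
  by (simp add: glob_src_def openin_disj_union topspace_disj_union)

lemma glob_rel_refl: "x \<in> topspace (glob_src Z l) \<Longrightarrow> x \<in> glob_rel Z l `` {x}"
  by (simp add: glob_rel_def)

lemma glob_height_class:
  assumes "x \<in> topspace (glob_src Z l)"
  shows "glob_height l (glob_rel Z l `` {x}) = glob_src_height l x"
proof -
  have "(x, SOME y. y \<in> glob_rel Z l `` {x}) \<in> glob_rel Z l"
    using someI[of "\<lambda>y. y \<in> glob_rel Z l `` {x}", OF glob_rel_refl[OF assms]] by simp
  then show ?thesis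
    unfolding glob_height_def glob_rel_def by (auto simp: glob_src_height_def)
qed

lemma glob_class_interior:
  assumes "z \<in> topspace Z" "0 < t" "t < l"
  shows "glob_rel Z l `` {Inr (z, t)} = {Inr (z, t)}"
  using assms by (auto simp: glob_rel_def topspace_glob_src)

text \<open>For \<open>l = 0\<close> the relation \<open>glob_rel\<close> is not transitive, hence the hypothesis \<open>0 < l\<close>.\<close>

lemma glob_class_bottom:
  assumes "z \<in> topspace Z" "0 < l"
  shows "glob_rel Z l `` {Inr (z, 0)} = glob_pt Z l (Inl False)"
  using assms by (auto simp: glob_pt_def glob_rel_def topspace_glob_src)

lemma glob_class_top:
  assumes "z \<in> topspace Z" "0 < l"
  shows "glob_rel Z l `` {Inr (z, l)} = glob_pt Z l (Inl True)"
  using assms by (auto simp: glob_pt_def glob_rel_def topspace_glob_src)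

lemma glob_fibre_class:
  assumes "z \<in> topspace Z" "0 < t" "t < l"
  shows "glob_fibre (glob_rel Z l `` {Inr (z, t)}) = z"
  using glob_class_interior[OF assms] by (simp add: glob_fibre_def)

lemma continuous_map_glob_src_height:
  assumes "0 \<le> l"
  shows "continuous_map (glob_src Z l) (interval_top l) (glob_src_height l)"
  unfolding continuous_map_def
proof (intro conjI allI impI)
  show "glob_src_height l \<in> topspace (glob_src Z l) \<rightarrow> topspace (interval_top l)"
    using assms by (auto simp: topspace_glob_src glob_src_height_def)
next
  fix U assume U: "openin (interval_top l) U"
  have "openin (prod_topology Z (interval_top l))
      {y \<in> topspace (prod_topology Z (interval_top l)). snd y \<in> U}"
    using continuous_map_snd U by (rule openin_continuous_map_preimage)
  then have "openin (dprod Z (interval_top l)) {y \<in> topspace (dprod Z (interval_top l)). snd y \<in> U}"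
    unfolding dprod_def by (simp add: openin_imp_openin_delta_kelley)
  moreover have "{y \<in> topspace (dprod Z (interval_top l)).
        Inr y \<in> {x \<in> topspace (glob_src Z l). glob_src_height l x \<in> U}}
      = {y \<in> topspace (dprod Z (interval_top l)). snd y \<in> U}"
    by (auto simp: topspace_glob_src dprod_def glob_src_height_def)
  ultimately show "openin (glob_src Z l) {x \<in> topspace (glob_src Z l). glob_src_height l x \<in> U}"
    unfolding openin_glob_src by simp
qed

lemma continuous_map_glob_height:
  "0 \<le> l \<Longrightarrow> continuous_map (glob_top Z l) (interval_top l) (glob_height l)"
  unfolding glob_top_def
  by (rule continuous_map_from_quot_top[OF continuous_map_glob_src_height])
    (simp_all add: glob_height_class)

lemma glob_class_in_band_iff:
  assumes "z \<in> topspace Z" "0 < t" "t < l" "V \<subseteq> topspace Z"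
  shows "glob_rel Z l `` {Inr (z, t)} \<in> glob_band Z l V \<longleftrightarrow> z \<in> V"
proof
  assume "glob_rel Z l `` {Inr (z, t)} \<in> glob_band Z l V"
  then obtain z' t' where zt': "glob_rel Z l `` {Inr (z, t)} = glob_rel Z l `` {Inr (z', t')}"
      "z' \<in> V" "0 < t'" "t' < l"
    unfolding glob_band_def by blast
  then have "{Inr (z, t)} = {Inr (z', t')}"
    using glob_class_interior[OF assms(1-3)] glob_class_interior[of z' Z t' l] assms(4) by auto
  with zt'(2) show "z \<in> V"
    by simp
next
  assume "z \<in> V"
  then show "glob_rel Z l `` {Inr (z, t)} \<in> glob_band Z l V"
    unfolding glob_band_def using assms(2,3) by blast
qed

lemma glob_band_preimage:
  fixes Z :: "'a topology"
  assumes VZ: "V \<subseteq> topspace Z"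
  shows "{x \<in> topspace (glob_src Z l). glob_rel Z l `` {x} \<in> glob_band Z l V}
      = Inr ` (V \<times> {0<..<l})"
proof
  show "{x \<in> topspace (glob_src Z l). glob_rel Z l `` {x} \<in> glob_band Z l V} \<subseteq> Inr ` (V \<times> {0<..<l})"
  proof clarify
    fix x assume x: "x \<in> topspace (glob_src Z l)" "glob_rel Z l `` {x} \<in> glob_band Z l V"
    then obtain z t where zt: "glob_rel Z l `` {x} = glob_rel Z l `` {Inr (z, t)}" "z \<in> V" "0 < t" "t < l"
      unfolding glob_band_def by blast
    then have "glob_rel Z l `` {x} = {Inr (z, t)}"
      using glob_class_interior[of z Z t l] VZ by auto
    then show "x \<in> Inr ` (V \<times> {0<..<l})"
      using glob_rel_refl[OF x(1)] zt(2-4) by auto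
  qed
  show "Inr ` (V \<times> {0<..<l}) \<subseteq> {x \<in> topspace (glob_src Z l). glob_rel Z l `` {x} \<in> glob_band Z l V}"
  proof
    fix x :: "bool + 'a \<times> real"
    assume "x \<in> Inr ` (V \<times> {0<..<l})"
    then obtain z t where zt: "x = Inr (z, t)" "z \<in> V" "0 < t" "t < l"
      by auto
    then have "x \<in> topspace (glob_src Z l)"
      using VZ by (auto simp: topspace_glob_src)
    moreover have "glob_rel Z l `` {x} \<in> glob_band Z l V"
      unfolding glob_band_def using zt by blast
    ultimately show "x \<in> {x \<in> topspace (glob_src Z l). glob_rel Z l `` {x} \<in> glob_band Z l V}"
      by blast
  qed
qed

lemma openin_glob_band:
  fixes Z :: "'a topology"
  assumes V: "openin Z V"
  shows "openin (glob_top Z l) (glob_band Z l V)"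
proof -
  have VZ: "V \<subseteq> topspace Z"
    using V by (rule openin_subset)
  have "openin (interval_top l) ({0..l} \<inter> {0<..<l})"
    unfolding interval_top_def openin_open by (rule exI[of _ "{0<..<l}"]) simp
  with V have "openin (dprod Z (interval_top l)) (V \<times> ({0..l} \<inter> {0<..<l}))"
    unfolding dprod_def by (simp add: openin_prod_Times_iff openin_imp_openin_delta_kelley)
  moreover have "{y \<in> topspace (dprod Z (interval_top l)). (Inr y :: bool + 'a \<times> real) \<in> Inr ` (V \<times> {0<..<l})}
      = V \<times> ({0..l} \<inter> {0<..<l})"
    using VZ by (auto simp: dprod_def)
  ultimately have "openin (dprod Z (interval_top l))
      {y \<in> topspace (dprod Z (interval_top l)). (Inr y :: bool + 'a \<times> real) \<in> Inr ` (V \<times> {0<..<l})}"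
    by (simp only:)
  moreover have "Inr ` (V \<times> {0<..<l}) \<subseteq> topspace (glob_src Z l)"
    using VZ by (auto simp: topspace_glob_src)
  ultimately have "openin (glob_src Z l) (Inr ` (V \<times> {0<..<l}))"
    unfolding openin_glob_src by blast
  moreover have "glob_band Z l V \<subseteq> topspace (glob_src Z l) // glob_rel Z l"
    using VZ by (auto simp: glob_band_def topspace_glob_src intro!: quotientI)
  ultimately show ?thesis
    unfolding glob_top_def openin_quot_top glob_band_preimage[OF VZ] by blast
qed

lemma continuous_map_glob_fibre:
  "continuous_map (subtopology (glob_top Z l) (glob_band Z l (topspace Z))) Z glob_fibre"
  unfolding continuous_map_def
proof (intro conjI allI impI)
  show "glob_fibre \<in> topspace (subtopology (glob_top Z l) (glob_band Z l (topspace Z))) \<rightarrow> topspace Z"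
    by (auto simp: glob_band_def glob_fibre_class)
next
  fix V assume V: "openin Z V"
  have fibre_in_iff: "glob_fibre c \<in> V \<longleftrightarrow> c \<in> glob_band Z l V"
    if c: "c \<in> glob_band Z l (topspace Z)" for c
  proof -
    obtain z t where c: "c = glob_rel Z l `` {Inr (z, t)}" "z \<in> topspace Z" "0 < t" "t < l"
      using c unfolding glob_band_def by blast
    then show ?thesis
      using glob_fibre_class[OF c(2-4)] glob_class_in_band_iff[OF c(2-4) openin_subset[OF V]] by simp
  qed
  have band: "glob_band Z l (topspace Z) \<subseteq> topspace (glob_top Z l)"
    using openin_subset[OF openin_glob_band[OF openin_topspace]] .
  have "{c \<in> topspace (subtopology (glob_top Z l) (glob_band Z l (topspace Z))). glob_fibre c \<in> V}
      = glob_band Z l (topspace Z) \<inter> glob_band Z l V"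
  proof (intro equalityI subsetI)
    fix c assume "c \<in> {c \<in> topspace (subtopology (glob_top Z l) (glob_band Z l (topspace Z))). glob_fibre c \<in> V}"
    then have "c \<in> glob_band Z l (topspace Z)" "glob_fibre c \<in> V"
      by simp_all
    then show "c \<in> glob_band Z l (topspace Z) \<inter> glob_band Z l V"
      using fibre_in_iff[of c] by simp
  next
    fix c assume c: "c \<in> glob_band Z l (topspace Z) \<inter> glob_band Z l V"
    then have "c \<in> topspace (glob_top Z l)" "glob_fibre c \<in> V"
      using band fibre_in_iff[of c] by auto
    with c show "c \<in> {c \<in> topspace (subtopology (glob_top Z l) (glob_band Z l (topspace Z))). glob_fibre c \<in> V}"
      by simp
  qed
  then show "openin (subtopology (glob_top Z l) (glob_band Z l (topspace Z)))
      {c \<in> topspace (subtopology (glob_top Z l) (glob_band Z l (topspace Z))). glob_fibre c \<in> V}"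
    using openin_subtopology_Int2[OF openin_glob_band[OF V]] by simp
qed

section \<open>Execution paths of the globe\<close>

lemma Gset_image:
  assumes "\<phi> \<in> Gset a b"
  shows "\<phi> ` {0..a} = {0..b}"
  using homeomorphic_imp_surjective_map[of "interval_top a" "interval_top b" \<phi>] assms
  by (simp add: Gset_def)

lemma Gset_endpoints:
  assumes \<phi>: "\<phi> \<in> Gset a b" and a: "0 \<le> a"
  shows "\<phi> 0 = 0" "\<phi> a = b"
proof -
  have mono: "mono_on {0..a} \<phi>"
    using \<phi> by (simp add: Gset_def)
  have ends: "\<phi> 0 \<in> {0..b}" "\<phi> a \<in> {0..b}"
    using Gset_image[OF \<phi>] a by auto
  then have "0 \<in> \<phi> ` {0..a}" "b \<in> \<phi> ` {0..a}"
    using Gset_image[OF \<phi>] by auto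
  then obtain t0 t1 where t0: "t0 \<in> {0..a}" "\<phi> t0 = 0" and t1: "t1 \<in> {0..a}" "\<phi> t1 = b"
    by (metis imageE)
  have "\<phi> 0 \<le> \<phi> t0"
    by (rule mono_onD[OF mono]) (use a t0 in auto)
  then show "\<phi> 0 = 0"
    using ends t0 by simp
  have "\<phi> t1 \<le> \<phi> a"
    by (rule mono_onD[OF mono]) (use a t1 in auto)
  then show "\<phi> a = b"
    using ends t1 by simp
qed

lemma Gset_interior:
  assumes \<phi>: "\<phi> \<in> Gset a b" and t: "0 < t" "t < a"
  shows "0 < \<phi> t" "\<phi> t < b"
proof -
  have mono: "mono_on {0..a} \<phi>" and inj: "inj_on \<phi> {0..a}"
    using \<phi> homeomorphic_imp_injective_map[of "interval_top a" "interval_top b" \<phi>]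
    by (auto simp: Gset_def)
  have "\<phi> 0 \<le> \<phi> t" "\<phi> t \<le> \<phi> a"
    by (rule mono_onD[OF mono]; use t in auto)+
  moreover have "\<phi> t \<noteq> \<phi> 0" "\<phi> t \<noteq> \<phi> a"
    using t inj_onD[OF inj, of t 0] inj_onD[OF inj, of t a] by auto
  ultimately show "0 < \<phi> t" "\<phi> t < b"
    using Gset_endpoints[OF \<phi>] t by auto
qed

definition glob_path :: "'a topology \<Rightarrow> real \<Rightarrow> (real \<Rightarrow> real) \<times> 'a \<Rightarrow> real \<Rightarrow> (bool + 'a \<times> real) set" where
  "glob_path Z l = (\<lambda>(\<phi>, z). restrict (glob_delta Z l z \<circ> \<phi>) {0..1})"

definition glob_path_coords :: "real \<Rightarrow> (real \<Rightarrow> (bool + 'a \<times> real) set) \<Rightarrow> (real \<Rightarrow> real) \<times> 'a" where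
  "glob_path_coords l \<gamma> = (restrict (\<lambda>t. glob_height l (\<gamma> t)) {0..1}, glob_fibre (\<gamma> (1/2)))"

definition glob_paths_01 :: "'a topology \<Rightarrow> real \<Rightarrow> (real \<Rightarrow> (bool + 'a \<times> real) set) set" where
  "glob_paths_01 Z l = {\<gamma> \<in> glob_paths Z l. \<gamma> 0 = glob_pt Z l (Inl False) \<and> \<gamma> 1 = glob_pt Z l (Inl True)}"

lemma glob_path_apply: "t \<in> {0..1} \<Longrightarrow> glob_path Z l (\<phi>, z) t = glob_rel Z l `` {Inr (z, \<phi> t)}"
  by (simp add: glob_path_def glob_delta_def glob_pt_def)

lemma glob_path_midpoint:
  assumes \<phi>: "\<phi> \<in> Gset 1 l" and z: "z \<in> topspace Z"
  shows "glob_path Z l (\<phi>, z) (1/2) \<in> glob_band Z l (topspace Z)"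
    "glob_fibre (glob_path Z l (\<phi>, z) (1/2)) = z"
proof -
  have mid: "0 < \<phi> (1/2)" "\<phi> (1/2) < l"
    using Gset_interior[OF \<phi>] by simp_all
  have eq: "glob_path Z l (\<phi>, z) (1/2) = glob_rel Z l `` {Inr (z, \<phi> (1/2))}"
    by (simp add: glob_path_apply)
  show "glob_path Z l (\<phi>, z) (1/2) \<in> glob_band Z l (topspace Z)"
    unfolding eq glob_band_def using z mid by blast
  show "glob_fibre (glob_path Z l (\<phi>, z) (1/2)) = z"
    unfolding eq using z mid by (rule glob_fibre_class)
qed

lemma glob_path_in_glob_paths_01:
  assumes \<phi>: "\<phi> \<in> Gset 1 l" and z: "z \<in> topspace Z"
  shows "glob_path Z l (\<phi>, z) \<in> glob_paths_01 Z l"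
proof -
  have l: "0 < l"
    using Gset_interior[OF \<phi>, of "1/2"] by simp
  have "glob_path Z l (\<phi>, z) \<in> glob_paths Z l"
    by (simp add: glob_paths_def glob_path_def) (use \<phi> z in blast)
  moreover have "glob_path Z l (\<phi>, z) 0 = glob_pt Z l (Inl False)"
    and "glob_path Z l (\<phi>, z) 1 = glob_pt Z l (Inl True)"
    using Gset_endpoints[OF \<phi>] glob_class_bottom[OF z l] glob_class_top[OF z l]
    by (simp_all add: glob_path_apply)
  ultimately show ?thesis
    unfolding glob_paths_01_def by blast
qed

lemma glob_path_coords_glob_path:
  assumes \<phi>: "\<phi> \<in> Gset 1 l" and z: "z \<in> topspace Z"
  shows "glob_path_coords l (glob_path Z l (\<phi>, z)) = (\<phi>, z)"
proof -
  have "restrict (\<lambda>t. glob_height l (glob_path Z l (\<phi>, z) t)) {0..1} t = \<phi> t" for t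
  proof (cases "t \<in> {0..1}")
    case True
    then have "\<phi> t \<in> {0..l}"
      using Gset_image[OF \<phi>] by blast
    then have "Inr (z, \<phi> t) \<in> topspace (glob_src Z l)"
      using z by (simp add: topspace_glob_src)
    then show ?thesis
      using True by (simp add: glob_path_apply glob_height_class glob_src_height_def)
  next
    case False
    then have "\<phi> t = undefined"
      using \<phi> unfolding Gset_def extensional_def by blast
    with False show ?thesis
      by auto
  qed
  then show ?thesis
    using glob_path_midpoint(2)[OF \<phi> z] by (simp add: glob_path_coords_def fun_eq_iff)
qed

lemma glob_paths_01E:
  assumes "\<gamma> \<in> glob_paths_01 Z l"
  obtains \<phi> z where "\<phi> \<in> Gset 1 l" "z \<in> topspace Z" "\<gamma> = glob_path Z l (\<phi>, z)"
  using assms unfolding glob_paths_01_def glob_paths_def glob_path_def by auto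

lemma glob_paths_01_coords:
  assumes "\<gamma> \<in> glob_paths_01 Z l"
  shows "glob_path_coords l \<gamma> \<in> Gset 1 l \<times> topspace Z" "glob_path Z l (glob_path_coords l \<gamma>) = \<gamma>"
  using assms by (auto elim!: glob_paths_01E simp: glob_path_coords_glob_path)

lemma glob_paths_01_midpoint:
  "\<gamma> \<in> glob_paths_01 Z l \<Longrightarrow> \<gamma> (1/2) \<in> glob_band Z l (topspace Z)"
  by (auto elim!: glob_paths_01E simp: glob_path_midpoint)

lemma continuous_map_glob_path_coords:
  assumes l: "0 \<le> l"
    and \<sigma>: "continuous_map (simplex_space p) (subtopology (TOP (interval_top 1) (glob_top Z l)) (glob_paths_01 Z l)) \<sigma>"
  shows "continuous_map (simplex_space p) (prod_topology (Gsp 1 l) Z) (glob_path_coords l \<circ> \<sigma>)"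
proof -
  have paths: "\<sigma> s \<in> glob_paths_01 Z l" if "s \<in> standard_simplex p" for s
    using \<sigma> that by (auto simp: continuous_map_in_subtopology)
  have "continuous_map (simplex_space p) (compact_open (interval_top 1) (glob_top Z l)) \<sigma>"
    using \<sigma> by (simp add: continuous_map_in_subtopology continuous_map_simplex_TOP_iff)
  then have H: "continuous_map (prod_topology (simplex_space p) (interval_top 1)) (glob_top Z l) (\<lambda>(s, t). \<sigma> s t)"
    by (rule continuous_map_uncurry_compact_open_interval)
  have "continuous_map (simplex_space p) (compact_open (interval_top 1) (interval_top l))
      (\<lambda>s. restrict (\<lambda>t. glob_height l (\<sigma> s t)) {0..1})"
    using continuous_map_curry_compact_open[OF continuous_map_compose[OF H continuous_map_glob_height[OF l]]]
    by (simp add: o_def)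
  moreover have "(\<lambda>s. restrict (\<lambda>t. glob_height l (\<sigma> s t)) {0..1}) = fst \<circ> (glob_path_coords l \<circ> \<sigma>)"
    by (simp add: glob_path_coords_def fun_eq_iff)
  moreover have "fst \<circ> (glob_path_coords l \<circ> \<sigma>) \<in> standard_simplex p \<rightarrow> Gset 1 l"
    using glob_paths_01_coords(1)[OF paths] by (simp add: Pi_iff mem_Times_iff)
  ultimately have height: "continuous_map (simplex_space p) (Gsp 1 l) (fst \<circ> (glob_path_coords l \<circ> \<sigma>))"
    unfolding Gsp_def continuous_map_simplex_dsub_iff continuous_map_simplex_TOP_iff by simp
  have "continuous_map (simplex_space p) (prod_topology (simplex_space p) (interval_top 1)) (\<lambda>s. (s, 1/2))"
    by (intro continuous_map_pairedI) (simp_all add: continuous_map_id)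
  from continuous_map_compose[OF this H]
  have "continuous_map (simplex_space p) (glob_top Z l) (\<lambda>s. \<sigma> s (1/2))"
    by (simp add: o_def)
  then have "continuous_map (simplex_space p) (subtopology (glob_top Z l) (glob_band Z l (topspace Z))) (\<lambda>s. \<sigma> s (1/2))"
    using glob_paths_01_midpoint[OF paths] by (auto simp: continuous_map_in_subtopology)
  then have fibre: "continuous_map (simplex_space p) Z (snd \<circ> (glob_path_coords l \<circ> \<sigma>))"
    using continuous_map_compose[OF _ continuous_map_glob_fibre] by (simp add: glob_path_coords_def o_def)
  show ?thesis
    using height fibre by (simp add: continuous_map_pairwise)
qed

lemma continuous_map_glob_path:
  assumes \<sigma>: "continuous_map (simplex_space p) (prod_topology (Gsp 1 l) Z) \<sigma>"
  shows "continuous_map (simplex_space p) (subtopology (TOP (interval_top 1) (glob_top Z l)) (glob_paths_01 Z l)) (glob_path Z l \<circ> \<sigma>)"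
proof -
  have \<phi>: "continuous_map (simplex_space p) (compact_open (interval_top 1) (interval_top l)) (fst \<circ> \<sigma>)"
    and \<phi>G: "fst \<circ> \<sigma> \<in> standard_simplex p \<rightarrow> Gset 1 l"
    and z: "continuous_map (simplex_space p) Z (snd \<circ> \<sigma>)"
    using \<sigma> unfolding continuous_map_pairwise Gsp_def continuous_map_simplex_dsub_iff
      continuous_map_simplex_TOP_iff by auto
  define g where "g = (\<lambda>(s, t). ((snd \<circ> \<sigma>) s, (fst \<circ> \<sigma>) s t))"
  have "continuous_map (prod_topology (simplex_space p) (interval_top 1)) (prod_topology Z (interval_top l)) g"
    unfolding g_def case_prod_unfold
    using continuous_map_compose[OF continuous_map_fst z] continuous_map_uncurry_compact_open_interval[OF \<phi>]
    by (intro continuous_map_pairedI) (simp_all add: o_def case_prod_unfold)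
  then have "continuous_map (prod_topology (simplex_space p) (interval_top 1)) (dprod Z (interval_top l)) g"
    unfolding dprod_def by (rule continuous_map_prism_into_delta_kelley)
  then have "continuous_map (prod_topology (simplex_space p) (interval_top 1)) (glob_top Z l)
      (\<lambda>w. glob_rel Z l `` {Inr (g w)})"
    using continuous_map_compose[OF continuous_map_compose[OF _ continuous_map_Inr_disj_union] continuous_map_quot_top]
    by (simp add: glob_top_def glob_src_def o_def)
  from continuous_map_curry_compact_open[OF this]
  have "continuous_map (simplex_space p) (compact_open (interval_top 1) (glob_top Z l))
      (\<lambda>s. restrict (\<lambda>t. glob_rel Z l `` {Inr (g (s, t))}) {0..1})"
    by simp
  moreover have "(\<lambda>s. restrict (\<lambda>t. glob_rel Z l `` {Inr (g (s, t))}) {0..1}) = glob_path Z l \<circ> \<sigma>"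
    by (simp add: fun_eq_iff glob_path_def glob_delta_def glob_pt_def g_def case_prod_unfold)
  moreover have "glob_path Z l \<circ> \<sigma> \<in> topspace (simplex_space p) \<rightarrow> glob_paths_01 Z l"
  proof
    fix s assume "s \<in> topspace (simplex_space p)"
    then have "fst (\<sigma> s) \<in> Gset 1 l" "snd (\<sigma> s) \<in> topspace Z"
      using \<phi>G funcset_mem[OF continuous_map_funspace[OF z]] by auto
    then show "(glob_path Z l \<circ> \<sigma>) s \<in> glob_paths_01 Z l"
      using glob_path_in_glob_paths_01[of "fst (\<sigma> s)" l "snd (\<sigma> s)" Z] by simp
  qed
  ultimately show ?thesis
    by (simp add: continuous_map_in_subtopology continuous_map_simplex_TOP_iff)
qed

lemma topspace_Gsp: "topspace (Gsp a b) \<subseteq> Gset a b"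
  by (simp add: Gsp_def dsub_def)

theorem proposition2p12:
  fixes Z :: "'a topology" and l :: real
  assumes "delta_generated Z" and "l > 0"
  shows "glob_paths_between Z l (glob_pt Z l (Inl False)) (glob_pt Z l (Inl True))
           homeomorphic_space dprod (Gsp 1 l) Z"
proof -
  have paths: "glob_paths_between Z l (glob_pt Z l (Inl False)) (glob_pt Z l (Inl True))
      = delta_kelley (subtopology (TOP (interval_top 1) (glob_top Z l)) (glob_paths_01 Z l))"
    by (simp add: glob_paths_between_def dsub_def glob_paths_01_def)
  show ?thesis
    unfolding paths dprod_def
  proof (rule homeomorphic_space_delta_kelleyI[where f = "glob_path_coords l" and g = "glob_path Z l"])
    show "continuous_map (simplex_space p) (prod_topology (Gsp 1 l) Z) (glob_path_coords l \<circ> \<sigma>)"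
      if "continuous_map (simplex_space p) (subtopology (TOP (interval_top 1) (glob_top Z l)) (glob_paths_01 Z l)) \<sigma>"
      for p \<sigma>
      using continuous_map_glob_path_coords[OF _ that] \<open>l > 0\<close> by simp
    show "continuous_map (simplex_space p) (subtopology (TOP (interval_top 1) (glob_top Z l)) (glob_paths_01 Z l)) (glob_path Z l \<circ> \<sigma>)"
      if "continuous_map (simplex_space p) (prod_topology (Gsp 1 l) Z) \<sigma>" for p \<sigma>
      using that by (rule continuous_map_glob_path)
    show "glob_path Z l (glob_path_coords l \<gamma>) = \<gamma>"
      if "\<gamma> \<in> topspace (subtopology (TOP (interval_top 1) (glob_top Z l)) (glob_paths_01 Z l))" for \<gamma>
      using that glob_paths_01_coords(2)[of \<gamma> Z l] by simp
    show "glob_path_coords l (glob_path Z l y) = y"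
      if "y \<in> topspace (prod_topology (Gsp 1 l) Z)" for y
      using that topspace_Gsp glob_path_coords_glob_path by (cases y) fastforce
  qed
qed

end
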